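(* Let $n\ge2$ be an integer and $\lambda>0$, and let $\gamma(t)=(\omega(t),x(t),y(t))$, $t\in(S,T)$ the maximal interval of existence, be a solution with $\omega>0$ of the system $$\frac{d\omega}{dt}=x\omega,\qquad \frac{dx}{dt}=x^2-xy+n-1-\lambda\omega^2,\qquad \frac{dy}{dt}=xy-nx^2-\lambda\omega^2.$$ Then the quantity $Q=y/\omega$ is strictly decreasing along $\gamma$. If moreover $\int_{t_0}^T\omega(\sigma)\,d\sigma=\infty$ for some (equivalently every) $t_0\in(S,T)$, then $\lim_{t\to T}Q(t)=-\infty$; in particular $y(t)<0$ for all $t$ sufficiently close to $T$. *)

theory Defs
  imports "HOL-Analysis.Analysis" "HOL-Library.Extended_Real"
begin

definition ival :: "ereal \<Rightarrow> ereal \<Rightarrow> real set" where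
  "ival S T = {t. S < ereal t \<and> ereal t < T}"

definition ode_sol ::
  "nat \<Rightarrow> real \<Rightarrow> (real \<Rightarrow> real) \<Rightarrow> (real \<Rightarrow> real) \<Rightarrow> (real \<Rightarrow> real) \<Rightarrow> real set \<Rightarrow> bool" where
  "ode_sol n lam w x y I \<longleftrightarrow>
     (\<forall>t\<in>I.
        (w has_real_derivative (x t * w t)) (at t) \<and>
        (x has_real_derivative (x t ^ 2 - x t * y t + real n - 1 - lam * w t ^ 2)) (at t) \<and>
        (y has_real_derivative (x t * y t - real n * x t ^ 2 - lam * w t ^ 2)) (at t))"

definition maximal_sol ::
  "nat \<Rightarrow> real \<Rightarrow> (real \<Rightarrow> real) \<Rightarrow> (real \<Rightarrow> real) \<Rightarrow> (real \<Rightarrow> real) \<Rightarrow> ereal \<Rightarrow> ereal \<Rightarrow> bool" where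
  "maximal_sol n lam w x y S T \<longleftrightarrow>
     S < T \<and> ode_sol n lam w x y (ival S T) \<and>
     \<not> (\<exists>S' T' w' x' y'. S' \<le> S \<and> T \<le> T' \<and> (S' < S \<or> T < T') \<and>
          ode_sol n lam w' x' y' (ival S' T') \<and>
          (\<forall>t\<in>ival S T. w' t = w t \<and> x' t = x t \<and> y' t = y t))"

definition to_right_end :: "ereal \<Rightarrow> real filter" where
  "to_right_end T = (if T = \<infinity> then at_top else at_left (real_of_ereal T))"

end

theory Submission
  imports Defs
begin

(* Along a solution, the x y terms cancel in the derivative of Q = y/w:
   Q' = -(n x^2 + lam w^2)/w <= -lam w < 0.  So Q is strictly decreasing and
   Q t <= Q t0 - lam * (integral of w over [t0,t]); if that integral diverges as t -> T,
   Q is unbounded below and, being monotone, tends to -infinity, whence y = Q w < 0 near T. *)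

lemma Icc_subset_ival:
  assumes "s \<in> ival S T" and "t \<in> ival S T"
  shows "{s..t} \<subseteq> ival S T"
proof
  fix u assume "u \<in> {s..t}"
  then have "ereal s \<le> ereal u" "ereal u \<le> ereal t" by auto
  with assms show "u \<in> ival S T"
    unfolding ival_def mem_Collect_eq by (meson less_le_trans le_less_trans)
qed

lemma eventually_ival_to_right_end:
  assumes "r \<in> ival S T"
  shows "\<forall>\<^sub>F t in to_right_end T. t \<in> ival S T \<and> r < t"
proof -
  have Sr: "S < ereal r" and rT: "ereal r < T"
    using assms unfolding ival_def by auto
  have in_ival: "t \<in> ival S T" if "r < t" "ereal t < T" for t
    using that Sr unfolding ival_def by (auto intro: less_trans)
  show ?thesis
  proof (cases T)
    case (real b)
    with rT have "r < b" by simp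
    then show ?thesis
      using real in_ival by (auto simp: to_right_end_def eventually_at_left)
  next
    case PInf
    then show ?thesis
      using in_ival by (auto simp: to_right_end_def intro: eventually_mono[OF eventually_gt_at_top[of r]])
  qed (use rT in simp)
qed

lemma filterlim_at_bot_to_right_end_if_decreasing:
  fixes Q :: "real \<Rightarrow> real"
  assumes dec: "\<And>s t. s \<in> ival S T \<Longrightarrow> t \<in> ival S T \<Longrightarrow> s < t \<Longrightarrow> Q t \<le> Q s"
    and unbounded: "\<And>Z. \<exists>t\<in>ival S T. Q t < Z"
  shows "filterlim Q at_bot (to_right_end T)"
  unfolding filterlim_at_bot
proof
  fix Z
  obtain r where r: "r \<in> ival S T" "Q r < Z"
    using unbounded by blast
  show "\<forall>\<^sub>F t in to_right_end T. Q t \<le> Z"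
    using eventually_ival_to_right_end[OF r(1)]
    by eventually_elim (use dec r in fastforce)
qed

lemma nn_integral_continuous_on_Icc:
  fixes f :: "real \<Rightarrow> real"
  assumes cont: "continuous_on {a..b} f" and nonneg: "\<And>t. t \<in> {a..b} \<Longrightarrow> 0 \<le> f t"
  shows "(\<lambda>s. ennreal (f s) * indicator {a..b} s) \<in> borel_measurable lborel"
    and "(\<integral>\<^sup>+ s. ennreal (f s) * indicator {a..b} s \<partial>lborel) = ennreal (integral {a..b} f)"
proof -
  have "(\<lambda>s. indicator {a..b} s *\<^sub>R f s) \<in> borel_measurable borel"
    using cont by (intro borel_measurable_continuous_on_indicator) auto
  then have "(\<lambda>s. ennreal (indicator {a..b} s *\<^sub>R f s)) \<in> borel_measurable lborel"
    by simp
  moreover have "(\<lambda>s. ennreal (indicator {a..b} s *\<^sub>R f s)) = (\<lambda>s. ennreal (f s) * indicator {a..b} s)"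
    by (auto simp: indicator_def)
  ultimately show "(\<lambda>s. ennreal (f s) * indicator {a..b} s) \<in> borel_measurable lborel"
    by simp
  show "(\<integral>\<^sup>+ s. ennreal (f s) * indicator {a..b} s \<partial>lborel) = ennreal (integral {a..b} f)"
    using nonneg cont by (intro nn_integral_has_integral_lebesgue' integrable_integral integrable_continuous_real)
qed

lemma nn_integral_tail_eq_SUP_integral:
  fixes f :: "real \<Rightarrow> real" and u :: "nat \<Rightarrow> real" and t0 :: real and T :: ereal
  assumes u: "incseq u" "\<And>k. u k < T" "(\<lambda>k. ereal (u k)) \<longlonglongrightarrow> T"
    and cont: "continuous_on {t. t0 \<le> t \<and> ereal t < T} f"
    and nonneg: "\<And>t. t0 \<le> t \<Longrightarrow> ereal t < T \<Longrightarrow> 0 \<le> f t"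
  shows "(\<integral>\<^sup>+ s\<in>{s. t0 \<le> s \<and> ereal s < T}. ennreal (f s) \<partial>lborel)
    = (SUP k. ennreal (integral {t0..u k} f))"
proof -
  have sub: "{t0..u k} \<subseteq> {t. t0 \<le> t \<and> ereal t < T}" for k
  proof
    fix s assume "s \<in> {t0..u k}"
    moreover from this have "ereal s \<le> ereal (u k)" by simp
    ultimately show "s \<in> {t. t0 \<le> t \<and> ereal t < T}"
      using le_less_trans[OF _ u(2)[of k]] by simp
  qed
  have Icc_nonneg: "t \<in> {t0..u k} \<Longrightarrow> 0 \<le> f t" for k t
    using sub nonneg by blast
  define g where "g k = (\<lambda>s. ennreal (f s) * indicator {t0..u k} s)" for k
  have g_Icc: "g k \<in> borel_measurable lborel" "integral\<^sup>N lborel (g k) = ennreal (integral {t0..u k} f)"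
    for k
    using nn_integral_continuous_on_Icc[OF continuous_on_subset[OF cont sub[of k]] Icc_nonneg[where k=k]]
    unfolding g_def by blast+
  have "incseq g"
  proof (intro incseq_SucI le_funI)
    fix k s
    show "g k s \<le> g (Suc k) s"
      using incseq_SucD[OF u(1), of k] by (auto simp: g_def indicator_def)
  qed
  moreover have "(SUP k. g k s) = ennreal (f s) * indicator {s. t0 \<le> s \<and> ereal s < T} s" for s
  proof (cases "t0 \<le> s \<and> ereal s < T")
    case True
    then have "\<forall>\<^sub>F k in sequentially. ereal s < ereal (u k)"
      using order_tendstoD(1)[OF u(3)] by blast
    then obtain k where "s \<le> u k"
      unfolding eventually_sequentially by (auto intro: less_imp_le)
    then have "g k s = ennreal (f s)"
      using True by (simp add: g_def)
    moreover have "g j s \<le> ennreal (f s)" for j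
      by (simp add: g_def indicator_def)
    ultimately show ?thesis
      using True by (intro antisym SUP_least) (auto intro: SUP_upper2[of k])
  next
    case False
    then have "g k s = 0" for k
      using sub[of k] by (auto simp: g_def indicator_def)
    then show ?thesis
      using False by simp
  qed
  ultimately show ?thesis
    using nn_integral_monotone_convergence_SUP[of g lborel] g_Icc by simp
qed

lemma nn_integral_infinite_imp_integral_unbounded:
  fixes f :: "real \<Rightarrow> real" and t0 c :: real and T :: ereal
  assumes "ereal t0 < T"
    and cont: "continuous_on {t. t0 \<le> t \<and> ereal t < T} f"
    and nonneg: "\<And>t. t0 \<le> t \<Longrightarrow> ereal t < T \<Longrightarrow> 0 \<le> f t"
    and infinite: "(\<integral>\<^sup>+ s\<in>{s. t0 \<le> s \<and> ereal s < T}. ennreal (f s) \<partial>lborel) = \<infinity>"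
  obtains t where "t0 \<le> t" "ereal t < T" "c < integral {t0..t} f"
proof -
  obtain u :: "nat \<Rightarrow> real"
    where u: "incseq u" "\<And>k. ereal t0 < u k" "\<And>k. u k < T" "(\<lambda>k. ereal (u k)) \<longlonglongrightarrow> T"
    using ereal_incseq_approx[OF \<open>ereal t0 < T\<close>] by blast
  have "ennreal (max 0 c) < (SUP k. ennreal (integral {t0..u k} f))"
    using nn_integral_tail_eq_SUP_integral[OF u(1,3,4) cont nonneg] infinite by simp
  then obtain k where "ennreal (max 0 c) < ennreal (integral {t0..u k} f)"
    by (auto simp: less_SUP_iff)
  then have "max 0 c < integral {t0..u k} f"
    by (metis ennreal_leI max.cobounded1 not_less)
  with u(2,3)[of k] show ?thesis
    by (intro that[of "u k"]) auto
qed

lemma ode_sol_continuous_on: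
  assumes "ode_sol n lam w x y I"
  shows "continuous_on I w"
  using assms unfolding ode_sol_def
  by (meson DERIV_isCont continuous_at_imp_continuous_on)

lemma ode_sol_quotient_has_derivative:
  assumes "ode_sol n lam w x y I" and "t \<in> I" and "w t \<noteq> 0"
  shows "((\<lambda>t. y t / w t) has_real_derivative - (real n * x t ^ 2 + lam * w t ^ 2) / w t) (at t)"
proof -
  have dw: "(w has_real_derivative x t * w t) (at t)"
    and dy: "(y has_real_derivative x t * y t - real n * x t ^ 2 - lam * w t ^ 2) (at t)"
    using assms(1,2) unfolding ode_sol_def by blast+
  show ?thesis
    using DERIV_divide[OF dy dw assms(3)]
    by (rule DERIV_cong) (use assms(3) in \<open>simp add: field_simps power2_eq_square\<close>)
qed

lemma quotient_derivative_le:
  fixes x w lam :: real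
  assumes "0 < w"
  shows "- (real n * x ^ 2 + lam * w ^ 2) / w \<le> - lam * w"
proof -
  have "- (real n * x ^ 2 + lam * w ^ 2) / w = - (real n * x ^ 2 / w) - lam * w"
    using assms by (simp add: field_simps power2_eq_square)
  moreover have "0 \<le> real n * x ^ 2 / w"
    using assms by simp
  ultimately show ?thesis
    by linarith
qed

lemma ode_sol_quotient_strict_decreasing:
  assumes sol: "ode_sol n lam w x y I" and "0 < lam"
    and wpos: "\<And>t. t \<in> I \<Longrightarrow> 0 < w t"
    and "{s..t} \<subseteq> I" and "s < t"
  shows "y t / w t < y s / w s"
proof (rule DERIV_neg_imp_decreasing[OF \<open>s < t\<close>])
  fix u assume "s \<le> u" "u \<le> t"
  with \<open>{s..t} \<subseteq> I\<close> have u: "u \<in> I" by auto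
  have "- (real n * x u ^ 2 + lam * w u ^ 2) / w u \<le> - lam * w u"
    using wpos[OF u] by (rule quotient_derivative_le)
  also have "\<dots> < 0"
    using \<open>0 < lam\<close> wpos[OF u] by simp
  finally show "\<exists>D. ((\<lambda>t. y t / w t) has_real_derivative D) (at u) \<and> D < 0"
    using ode_sol_quotient_has_derivative[OF sol u] wpos[OF u] by fastforce
qed

lemma ode_sol_quotient_integral_bound:
  assumes sol: "ode_sol n lam w x y I"
    and wpos: "\<And>t. t \<in> I \<Longrightarrow> 0 < w t"
    and sub: "{a..b} \<subseteq> I" and "a \<le> b"
  shows "y b / w b \<le> y a / w a - lam * integral {a..b} w"
proof -
  let ?Q = "\<lambda>t. y t / w t" and ?Q' = "\<lambda>t. - (real n * x t ^ 2 + lam * w t ^ 2) / w t"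
  have "(?Q' has_integral (?Q b - ?Q a)) {a..b}"
  proof (rule fundamental_theorem_of_calculus[OF \<open>a \<le> b\<close>])
    fix u assume "u \<in> {a..b}"
    with sub have u: "u \<in> I" by blast
    show "(?Q has_vector_derivative ?Q' u) (at u within {a..b})"
      using ode_sol_quotient_has_derivative[OF sol u] wpos[OF u]
      by (auto simp: has_real_derivative_iff_has_vector_derivative intro: has_vector_derivative_at_within)
  qed
  moreover have "((\<lambda>t. - lam * w t) has_integral - lam * integral {a..b} w) {a..b}"
    using continuous_on_subset[OF ode_sol_continuous_on[OF sol] sub]
    by (intro has_integral_mult_right integrable_integral integrable_continuous_real)
  ultimately have "?Q b - ?Q a \<le> - lam * integral {a..b} w"
    by (rule has_integral_le) (use sub wpos quotient_derivative_le in blast)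
  then show ?thesis
    by simp
qed

lemma ode_sol_quotient_filterlim_at_bot:
  assumes sol: "ode_sol n lam w x y (ival S T)" and "0 < lam"
    and wpos: "\<And>t. t \<in> ival S T \<Longrightarrow> 0 < w t"
    and t0: "t0 \<in> ival S T"
    and infinite: "(\<integral>\<^sup>+ s\<in>{s. t0 \<le> s \<and> ereal s < T}. ennreal (w s) \<partial>lborel) = \<infinity>"
  shows "filterlim (\<lambda>t. y t / w t) at_bot (to_right_end T)"
proof (rule filterlim_at_bot_to_right_end_if_decreasing)
  fix s t assume "s \<in> ival S T" "t \<in> ival S T" "s < t"
  then show "y t / w t \<le> y s / w s"
    using ode_sol_quotient_strict_decreasing[OF sol \<open>0 < lam\<close> wpos Icc_subset_ival] by fastforce
next
  fix Z
  have "ereal t0 < T" and tail: "{t. t0 \<le> t \<and> ereal t < T} \<subseteq> ival S T"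
    using t0 unfolding ival_def by (auto intro: less_le_trans[of S "ereal t0"])
  obtain t where t: "t0 \<le> t" "ereal t < T" "(y t0 / w t0 - Z) / lam < integral {t0..t} w"
    using nn_integral_infinite_imp_integral_unbounded
      [OF \<open>ereal t0 < T\<close> continuous_on_subset[OF ode_sol_continuous_on[OF sol] tail] _ infinite]
      wpos tail by (metis less_imp_le mem_Collect_eq subsetD)
  with tail have "t \<in> ival S T" by blast
  have "y t / w t \<le> y t0 / w t0 - lam * integral {t0..t} w"
    using sol wpos Icc_subset_ival[OF t0 \<open>t \<in> ival S T\<close>] \<open>t0 \<le> t\<close>
    by (rule ode_sol_quotient_integral_bound)
  also have "\<dots> < Z"
    using t(3) \<open>0 < lam\<close> by (simp add: field_simps)
  finally show "\<exists>t\<in>ival S T. y t / w t < Z"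
    using \<open>t \<in> ival S T\<close> by blast
qed

theorem lemma3p5:
  fixes n :: nat and lam :: real and w x y :: "real \<Rightarrow> real" and S T :: ereal
  assumes "n \<ge> 2" and "lam > 0"
    and "maximal_sol n lam w x y S T"
    and "\<forall>t\<in>ival S T. w t > 0"
  shows "(\<forall>s\<in>ival S T. \<forall>t\<in>ival S T. s < t \<longrightarrow> y t / w t < y s / w s)
    \<and> ((\<exists>t0\<in>ival S T. (\<integral>\<^sup>+ s\<in>{s. t0 \<le> s \<and> ereal s < T}. ennreal (w s) \<partial>lborel) = \<infinity>)
        \<longrightarrow> filterlim (\<lambda>t. y t / w t) at_bot (to_right_end T)
            \<and> (\<forall>\<^sub>F t in to_right_end T. y t < 0))"
proof -
  have sol: "ode_sol n lam w x y (ival S T)"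
    using assms(3) unfolding maximal_sol_def by blast
  have wpos: "\<And>t. t \<in> ival S T \<Longrightarrow> 0 < w t"
    using assms(4) by blast
  have "y t / w t < y s / w s" if "s \<in> ival S T" "t \<in> ival S T" "s < t" for s t
    using sol \<open>0 < lam\<close> wpos Icc_subset_ival[OF that(1,2)] \<open>s < t\<close>
    by (rule ode_sol_quotient_strict_decreasing)
  moreover have "filterlim (\<lambda>t. y t / w t) at_bot (to_right_end T) \<and> (\<forall>\<^sub>F t in to_right_end T. y t < 0)"
    if t0: "t0 \<in> ival S T"
      and "(\<integral>\<^sup>+ s\<in>{s. t0 \<le> s \<and> ereal s < T}. ennreal (w s) \<partial>lborel) = \<infinity>" for t0
  proof -
    have lim: "filterlim (\<lambda>t. y t / w t) at_bot (to_right_end T)"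
      using sol \<open>0 < lam\<close> wpos that by (rule ode_sol_quotient_filterlim_at_bot)
    then have "\<forall>\<^sub>F t in to_right_end T. y t / w t < 0"
      unfolding filterlim_at_bot_dense by blast
    with eventually_ival_to_right_end[OF t0] have "\<forall>\<^sub>F t in to_right_end T. y t < 0"
      by eventually_elim (force simp: divide_less_0_iff dest: wpos)
    with lim show ?thesis
      by blast
  qed
  ultimately show ?thesis
    by blast
qed

end
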